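(* Let $X$ be a real random variable with finite mean $\mu:=\mathbb{E}(X)$ such that $\mu$ is also a median of $X$, i.e. $\mathbb{P}(X\ge\mu)\ge\frac12$ and $\mathbb{P}(X\le\mu)\ge\frac12$. Then \[ \mathbb{E}(X\mid X\ge \mu) \le \mu + \sqrt{\text{Var}(X)}. \] *)

theory Defs
  imports "HOL-Probability.Probability"
begin

definition cond_exp_event :: "'a measure \<Rightarrow> ('a \<Rightarrow> real) \<Rightarrow> 'a set \<Rightarrow> real" where
  "cond_exp_event M X A = (LINT x:A|M. X x) / measure M A"

end

theory Submission
  imports Defs
begin

text \<open>Write \<open>A = {X \<ge> \<mu>}\<close>. Since \<open>X \<cdot> 1\<^sub>A = (\<bar>X - \<mu>\<bar> + (X - \<mu>))/2 + \<mu> \<cdot> 1\<^sub>A\<close>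
  and \<open>E(X - \<mu>) = 0\<close>, one gets \<open>E(X | A) = \<mu> + E\<bar>X - \<mu>\<bar> / (2 P(A))\<close>. Finally
  \<open>E\<bar>X - \<mu>\<bar> \<le> sqrt(Var X)\<close> because the variance of \<open>\<bar>X - \<mu>\<bar>\<close> is nonnegative.\<close>

context prob_space
begin

lemma expectation_abs_le_sqrt_expectation_square:
  fixes Y :: "'a \<Rightarrow> real"
  assumes "integrable M Y" and "integrable M (\<lambda>x. (Y x)\<^sup>2)"
  shows "expectation (\<lambda>x. \<bar>Y x\<bar>) \<le> sqrt (expectation (\<lambda>x. (Y x)\<^sup>2))"
proof -
  have "0 \<le> variance (\<lambda>x. \<bar>Y x\<bar>)"
    by (rule variance_positive)
  also have "\<dots> = expectation (\<lambda>x. (Y x)\<^sup>2) - (expectation (\<lambda>x. \<bar>Y x\<bar>))\<^sup>2"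
    using variance_eq[of "\<lambda>x. \<bar>Y x\<bar>"] assms by simp
  finally show ?thesis
    using real_le_rsqrt by simp
qed

lemma expectation_abs_deviation_le_sqrt_variance:
  fixes X :: "'a \<Rightarrow> real"
  assumes "integrable M X" and "integrable M (\<lambda>x. (X x)\<^sup>2)"
  shows "expectation (\<lambda>x. \<bar>X x - expectation X\<bar>) \<le> sqrt (variance X)"
  using expectation_abs_le_sqrt_expectation_square[of "\<lambda>x. X x - expectation X"] assms
  by (simp add: power2_diff)

lemma set_integral_upper_tail:
  fixes X :: "'a \<Rightarrow> real" and c :: real
  assumes "integrable M X"
  defines "A \<equiv> {x \<in> space M. c \<le> X x}"
  shows "(LINT x:A|M. X x)
           = (expectation (\<lambda>x. \<bar>X x - c\<bar>) + (expectation X - c)) / 2 + c * prob A"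
proof -
  have A: "A \<in> events"
    unfolding A_def using borel_measurable_integrable[OF assms(1)] by measurable
  have split: "indicator A x * X x = (\<bar>X x - c\<bar> + (X x - c)) / 2 + c * indicator A x"
    if "x \<in> space M" for x
    using that by (auto simp: A_def indicator_def field_simps)
  have "(LINT x:A|M. X x) = expectation (\<lambda>x. (\<bar>X x - c\<bar> + (X x - c)) / 2 + c * indicator A x)"
    unfolding set_lebesgue_integral_def by (rule Bochner_Integration.integral_cong) (simp_all add: split)
  also have "\<dots> = expectation (\<lambda>x. (\<bar>X x - c\<bar> + (X x - c)) / 2) + expectation (\<lambda>x. c * indicator A x)"
    using assms(1) A
    by (intro Bochner_Integration.integral_add) (auto intro!: integrable_real_indicator simp: less_top[symmetric])
  also have "\<dots> = (expectation (\<lambda>x. \<bar>X x - c\<bar>) + (expectation X - c)) / 2 + c * prob A"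
    using assms(1) A prob_space by simp
  finally show ?thesis .
qed

end

theorem lemma5:
  fixes M :: "'a measure" and X :: "'a \<Rightarrow> real" and \<mu> :: real
  assumes "prob_space M"
    and "X \<in> borel_measurable M"
    and "integrable M X"
    and "integrable M (\<lambda>x. (X x)\<^sup>2)"
    and "\<mu> = prob_space.expectation M X"
    and "measure M {x \<in> space M. X x \<ge> \<mu>} \<ge> 1/2"
    and "measure M {x \<in> space M. X x \<le> \<mu>} \<ge> 1/2"
  shows "cond_exp_event M X {x \<in> space M. X x \<ge> \<mu>}
           \<le> \<mu> + sqrt (prob_space.variance M X)"
proof -
  interpret prob_space M by fact
  define A where "A = {x \<in> space M. \<mu> \<le> X x}"
  define m where "m = expectation (\<lambda>x. \<bar>X x - \<mu>\<bar>)"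
  have p: "prob A \<ge> 1/2"
    using assms(6) by (simp add: A_def)
  have m: "0 \<le> m" "m \<le> sqrt (variance X)"
    using expectation_abs_deviation_le_sqrt_variance[OF assms(3,4)] assms(5)
    by (auto simp: m_def intro: integral_nonneg_AE)
  have "cond_exp_event M X A = \<mu> + m / (2 * prob A)"
    using set_integral_upper_tail[OF assms(3), of \<mu>] assms(5) p
    by (simp add: cond_exp_event_def A_def m_def field_simps)
  also have "m / (2 * prob A) \<le> m"
    using p m(1) mult_left_mono[of 1 "2 * prob A" m] by (simp add: divide_le_eq)
  finally show ?thesis
    using m(2) by (simp add: A_def)
qed

end
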